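(* Let $F$ satisfy the standing assumptions below, $\beta\in(0,1)$, $D>0$, $\mu\ge0$, and run the general conversion scheme below with any online learner and any choices of $\mathbf{x}_t$. Let $\mathbf{u}_t:=-D\frac{\sum_{s=1}^t\beta^{t-s}\nabla F(\mathbf{y}_s)}{\|\sum_{s=1}^t\beta^{t-s}\nabla F(\mathbf{y}_s)\|}$, and for $t\in[T]$ let $\mathbf{Y}_t$ be the random point equal to $\mathbf{y}_s$ with probability $q_{t,s}:=\beta^{t-s}\frac{1-\beta}{1-\beta^t}$, $s=1,\dots,t$ (so $\mathbb{E}_{\mathbf{Y}_t}\nabla F(\mathbf{Y}_t)=\sum_{s=1}^tq_{t,s}\nabla F(\mathbf{y}_s)$). Then $$\mathbb{E}_\tau\|\mathbb{E}_{\mathbf{Y}_\tau}\nabla F(\mathbf{Y}_\tau)\|\le\frac{\beta\,\mathbb{E}[\mathrm{Regret}^\beta_T(\mathbf{u}_T)]+(1-\beta)\sum_{t=1}^T\mathbb{E}[\mathrm{Regret}^\beta_t(\mathbf{u}_t)]}{DT}-\frac{\mu\,\mathbb{E}\sum_{t=1}^T\|\Delta_t\|^2}{2DT}+\frac{\mathbb{E}\sum_{t=1}^T(F(\mathbf{x}_t)-F(\mathbf{w}_t))}{DT}+\frac{\sigma\beta}{T\sqrt{1-\beta}}+\sigma\sqrt{1-\beta}+\frac{\mu D}{2}.$$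
   Context: Norms are Euclidean. Standing assumptions: $F:\mathbb{R}^d\to\mathbb{R}$ differentiable; for all $\mathbf{x},\mathbf{w}$, $F(\mathbf{x})-F(\mathbf{w})=\int_0^1\langle\nabla F(\mathbf{w}+t(\mathbf{x}-\mathbf{w})),\mathbf{x}-\mathbf{w}\rangle\,dt$; $\|\nabla F\|\le G$ everywhere. The stochastic gradient oracle at $\mathbf{x}$ independently returns $\mathbf{g}$ with $\mathbb{E}\mathbf{g}=\nabla F(\mathbf{x})$, $\mathbb{E}\|\mathbf{g}-\nabla F(\mathbf{x})\|^2\le\sigma^2$. General conversion scheme: input $\mathbf{x}_0=\mathbf{w}_0$, $T$, $\mu\ge0$, online learner $\mathcal{A}$ (output $\Delta_t$ at round $t$ based on $\ell_1,\dots,\ell_{t-1}$). For $t=1,\dots,T$: receive $\Delta_t$; choose $\mathbf{x}_t$ arbitrarily (may depend on everything so far including $\Delta_t$, not on $s_t,\mathbf{g}_t$ or later randomness); $\mathbf{w}_t=\mathbf{x}_t+\Delta_t$; $\mathbf{y}_t=\mathbf{x}_t+s_t\Delta_t$, $s_t\sim\mathrm{Unif}[0,1]$ i.i.d.; $\mathbf{g}_t$ = oracle output at $\mathbf{y}_t$; send $\ell_t(\mathbf{v})=\langle\mathbf{g}_t,\mathbf{v}\rangle+\frac\mu2\|\mathbf{v}\|^2$ to $\mathcal{A}$. $\mathrm{Regret}^\beta_t(\mathbf{u}) := \sum_{s=1}^t\beta^{t-s}(\ell_s(\Delta_s)-\ell_s(\mathbf{u}))$. $\tau$ is independent of the algorithm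 with $\Pr(\tau=t)=\frac{1-\beta^t}{T}$ ($t\le T-1$), $\Pr(\tau=T)=\frac{1-\beta^T}{(1-\beta)T}$; $\mathbb{E}_\tau$ is expectation over $\tau$ and all algorithmic randomness. *)

theory Defs
  imports "HOL-Probability.Probability"
begin

text \<open>Round t (t = 1,2,...) uses the
  component omega t = (s_t, xi_t): s_t ~ Unif[0,1] and xi_t ~ N the internal randomness of
  the stochastic oracle; all components are independent (product measure).\<close>
definition conv_space :: "'w measure \<Rightarrow> (nat \<Rightarrow> real \<times> 'w) measure" where
  "conv_space N = (\<Pi>\<^sub>M i\<in>UNIV. (uniform_measure lborel {0..1::real}) \<Otimes>\<^sub>M N)"

definition cs_y :: "(nat \<Rightarrow> (nat \<Rightarrow> real \<times> 'w) \<Rightarrow> 'a::real_normed_vector) \<Rightarrow>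
    (nat \<Rightarrow> (nat \<Rightarrow> real \<times> 'w) \<Rightarrow> 'a) \<Rightarrow> nat \<Rightarrow> (nat \<Rightarrow> real \<times> 'w) \<Rightarrow> 'a" where
  "cs_y x \<Delta> t \<omega> = x t \<omega> + fst (\<omega> t) *\<^sub>R \<Delta> t \<omega>"

definition cs_w :: "(nat \<Rightarrow> (nat \<Rightarrow> real \<times> 'w) \<Rightarrow> 'a::real_normed_vector) \<Rightarrow>
    (nat \<Rightarrow> (nat \<Rightarrow> real \<times> 'w) \<Rightarrow> 'a) \<Rightarrow> nat \<Rightarrow> (nat \<Rightarrow> real \<times> 'w) \<Rightarrow> 'a" where
  "cs_w x \<Delta> t \<omega> = x t \<omega> + \<Delta> t \<omega>"

definition cs_g :: "('a \<Rightarrow> 'w \<Rightarrow> 'a) \<Rightarrow> (nat \<Rightarrow> (nat \<Rightarrow> real \<times> 'w) \<Rightarrow> 'a::real_normed_vector) \<Rightarrow>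
    (nat \<Rightarrow> (nat \<Rightarrow> real \<times> 'w) \<Rightarrow> 'a) \<Rightarrow> nat \<Rightarrow> (nat \<Rightarrow> real \<times> 'w) \<Rightarrow> 'a" where
  "cs_g orc x \<Delta> t \<omega> = orc (cs_y x \<Delta> t \<omega>) (snd (\<omega> t))"

definition cs_loss :: "real \<Rightarrow> 'a::real_inner \<Rightarrow> 'a \<Rightarrow> real" where
  "cs_loss \<mu> g v = inner g v + \<mu> / 2 * (norm v)\<^sup>2"

definition cs_regret :: "real \<Rightarrow> real \<Rightarrow> ('a \<Rightarrow> 'w \<Rightarrow> 'a) \<Rightarrow>
    (nat \<Rightarrow> (nat \<Rightarrow> real \<times> 'w) \<Rightarrow> 'a::real_inner) \<Rightarrow> (nat \<Rightarrow> (nat \<Rightarrow> real \<times> 'w) \<Rightarrow> 'a) \<Rightarrow>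
    nat \<Rightarrow> 'a \<Rightarrow> (nat \<Rightarrow> real \<times> 'w) \<Rightarrow> real" where
  "cs_regret \<beta> \<mu> orc x \<Delta> t u \<omega> =
     (\<Sum>s=1..t. \<beta> ^ (t - s) *
        (cs_loss \<mu> (cs_g orc x \<Delta> s \<omega>) (\<Delta> s \<omega>) - cs_loss \<mu> (cs_g orc x \<Delta> s \<omega>) u))"

text \<open>u_t = - D S / |S| with S = sum_{s=1}^t beta^(t-s) grad F(y_s)  (u_t = 0 if S = 0)\<close>
definition cs_u :: "real \<Rightarrow> real \<Rightarrow> ('a \<Rightarrow> 'a) \<Rightarrow>
    (nat \<Rightarrow> (nat \<Rightarrow> real \<times> 'w) \<Rightarrow> 'a::real_normed_vector) \<Rightarrow> (nat \<Rightarrow> (nat \<Rightarrow> real \<times> 'w) \<Rightarrow> 'a) \<Rightarrow>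
    nat \<Rightarrow> (nat \<Rightarrow> real \<times> 'w) \<Rightarrow> 'a" where
  "cs_u D \<beta> gradF x \<Delta> t \<omega> =
     (let S = (\<Sum>s=1..t. \<beta> ^ (t - s) *\<^sub>R gradF (cs_y x \<Delta> s \<omega>)) in - ((D / norm S) *\<^sub>R S))"

definition tau_prob :: "real \<Rightarrow> nat \<Rightarrow> nat \<Rightarrow> real" where
  "tau_prob \<beta> T t = (if t < T then (1 - \<beta> ^ t) / T else (1 - \<beta> ^ T) / ((1 - \<beta>) * T))"

definition cs_q :: "real \<Rightarrow> nat \<Rightarrow> nat \<Rightarrow> real" where
  "cs_q \<beta> t s = \<beta> ^ (t - s) * (1 - \<beta>) / (1 - \<beta> ^ t)"

end

theory Submission
  imports Defs
begin

(*
  Write g_t = grad F(y_t) + e_t.  Since s_t is uniform on [0,1] and independent of the past,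
  E <grad F(y_t), Delta_t> = E [F(w_t) - F(x_t)] by the fundamental theorem of calculus on the
  segment [x_t, w_t]; and the oracle noise e_t is centred given everything chosen before it, so
  it is orthogonal to Delta_t and to the earlier noises, whence
  E |sum_s beta^(t-s) e_s| <= sigma / sqrt (1 - beta).
  Against the comparator u_t = - D S_t / |S_t|, S_t = sum_s beta^(t-s) grad F(y_s), the
  discounted regret is at least
    sum_s beta^(t-s) l_s(Delta_s) + D |S_t| - D |sum_s beta^(t-s) e_s| - mu D^2/2 sum_s beta^(t-s).
  The combination beta Regret_T + (1 - beta) sum_t Regret_t undoes the discounting, turning the
  first term into sum_t l_t(Delta_t), and the law of tau is chosen so that
  T E_tau |E_Y grad F(Y_tau)| is the same combination of the |S_t|.
*)

section \<open>Exponentially discounted sums\<close>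

text \<open>The weighting of the regrets in the theorem; it inverts exponential discounting
  (\<open>undiscount_discounted_sum\<close>).\<close>

definition undiscount :: "real \<Rightarrow> nat \<Rightarrow> (nat \<Rightarrow> real) \<Rightarrow> real" where
  "undiscount \<beta> T f = \<beta> * f T + (1 - \<beta>) * (\<Sum>t=1..T. f t)"

lemma discounted_sum_Suc:
  fixes \<beta> :: "'a::comm_semiring_1"
  shows "(\<Sum>s=1..Suc t. \<beta> ^ (Suc t - s) * a s) = \<beta> * (\<Sum>s=1..t. \<beta> ^ (t - s) * a s) + a (Suc t)"
  by (simp add: sum_distrib_left Suc_diff_le mult.assoc)

lemma undiscount_discounted_sum:
  "undiscount \<beta> n (\<lambda>t. \<Sum>s=1..t. \<beta> ^ (t - s) * a s) = (\<Sum>t=1..n. a t)"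
proof (induction n)
  case (Suc n)
  define R where "R = (\<lambda>t. \<Sum>s=1..t. \<beta> ^ (t - s) * a s)"
  have "R (Suc n) = \<beta> * R n + a (Suc n)"
    unfolding R_def by (rule discounted_sum_Suc)
  then have "undiscount \<beta> (Suc n) R = undiscount \<beta> n R + a (Suc n)"
    by (simp add: undiscount_def algebra_simps)
  then show ?case
    using Suc.IH by (simp add: R_def)
qed (simp add: undiscount_def)

lemma undiscount_add: "undiscount \<beta> T (\<lambda>t. f t + g t) = undiscount \<beta> T f + undiscount \<beta> T g"
  by (simp add: undiscount_def sum.distrib algebra_simps)

lemma undiscount_diff: "undiscount \<beta> T (\<lambda>t. f t - g t) = undiscount \<beta> T f - undiscount \<beta> T g"
  by (simp add: undiscount_def sum_subtractf algebra_simps)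

lemma undiscount_cmult: "undiscount \<beta> T (\<lambda>t. c * f t) = c * undiscount \<beta> T f"
  by (simp add: undiscount_def sum_distrib_left[symmetric] algebra_simps)

lemma undiscount_const: "undiscount \<beta> T (\<lambda>_. c) = c * (\<beta> + (1 - \<beta>) * T)"
  by (simp add: undiscount_def algebra_simps)

lemma
  fixes f :: "nat \<Rightarrow> 'a \<Rightarrow> real"
  assumes "1 \<le> T" "\<And>t. 1 \<le> t \<Longrightarrow> t \<le> T \<Longrightarrow> integrable M (f t)"
  shows integrable_undiscount: "integrable M (\<lambda>\<omega>. undiscount \<beta> T (\<lambda>t. f t \<omega>))"
    and integral_undiscount:
      "(\<integral>\<omega>. undiscount \<beta> T (\<lambda>t. f t \<omega>) \<partial>M) = undiscount \<beta> T (\<lambda>t. \<integral>\<omega>. f t \<omega> \<partial>M)"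
proof -
  have int: "\<And>t. t \<in> {1..T} \<Longrightarrow> integrable M (f t)" and int_T: "integrable M (f T)"
    using assms by auto
  have int_sum: "integrable M (\<lambda>\<omega>. \<Sum>t=1..T. f t \<omega>)"
    by (rule Bochner_Integration.integrable_sum[OF int])
  then show "integrable M (\<lambda>\<omega>. undiscount \<beta> T (\<lambda>t. f t \<omega>))"
    using int_T by (simp add: undiscount_def)
  show "(\<integral>\<omega>. undiscount \<beta> T (\<lambda>t. f t \<omega>) \<partial>M) = undiscount \<beta> T (\<lambda>t. \<integral>\<omega>. f t \<omega> \<partial>M)"
  proof -
    have "(\<integral>\<omega>. (\<Sum>t=1..T. f t \<omega>) \<partial>M) = (\<Sum>t=1..T. \<integral>\<omega>. f t \<omega> \<partial>M)"
      by (rule Bochner_Integration.integral_sum) (rule int)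
    then show ?thesis using int_sum int_T by (simp add: undiscount_def)
  qed
qed

lemma undiscount_mono:
  assumes "0 \<le> \<beta>" "\<beta> \<le> 1" "\<And>t. 1 \<le> t \<Longrightarrow> t \<le> T \<Longrightarrow> f t \<le> g t" "1 \<le> T"
  shows "undiscount \<beta> T f \<le> undiscount \<beta> T g"
  unfolding undiscount_def using assms by (intro add_mono mult_left_mono sum_mono) auto

lemma discounted_geometric_sum:
  fixes \<beta> :: "'a::comm_ring_1"
  shows "(1 - \<beta>) * (\<Sum>s=1..t. \<beta> ^ (t - s)) = 1 - \<beta> ^ t"
  using one_diff_power_eq'[of \<beta> t] sum_bounds_lt_plus1[of "\<lambda>s. \<beta> ^ (t - s)" t] by simp

lemma discounted_geometric_sum_le:
  assumes "0 \<le> \<beta>" "\<beta> < (1::real)"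
  shows "(\<Sum>s=1..t. \<beta> ^ (t - s)) \<le> 1 / (1 - \<beta>)"
proof -
  have "(1 - \<beta>) * (\<Sum>s=1..t. \<beta> ^ (t - s)) \<le> 1"
    using discounted_geometric_sum[of \<beta> t] assms by simp
  then show ?thesis using assms by (simp add: field_simps)
qed

lemma sum_cs_q_scaleR:
  fixes v :: "nat \<Rightarrow> 'a::real_vector"
  shows "(\<Sum>s=1..t. cs_q \<beta> t s *\<^sub>R v s) = ((1 - \<beta>) / (1 - \<beta> ^ t)) *\<^sub>R (\<Sum>s=1..t. \<beta> ^ (t - s) *\<^sub>R v s)"
  unfolding scaleR_right.sum by (intro sum.cong refl) (simp add: cs_q_def)

lemma tau_prob_sum_norm_cs_q:
  fixes v :: "nat \<Rightarrow> 'a::real_normed_vector"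
  assumes "0 \<le> \<beta>" "\<beta> < 1" "1 \<le> T"
  shows "T * (\<Sum>t=1..T. tau_prob \<beta> T t * norm (\<Sum>s=1..t. cs_q \<beta> t s *\<^sub>R v s))
    = undiscount \<beta> T (\<lambda>t. norm (\<Sum>s=1..t. \<beta> ^ (t - s) *\<^sub>R v s))"
proof -
  have power_less: "\<beta> ^ t < 1" if "1 \<le> t" for t
    using assms that by (simp add: power_less_one_iff)
  have weight: "T * tau_prob \<beta> T t * ((1 - \<beta>) / (1 - \<beta> ^ t)) = (if t < T then 1 - \<beta> else 1)"
    if "1 \<le> t" "t \<le> T" for t
    using power_less[OF that(1)] assms that by (auto simp: tau_prob_def field_simps)
  obtain n where n: "T = Suc n" using assms(3) by (cases T) auto
  have "T * (\<Sum>t=1..T. tau_prob \<beta> T t * norm (\<Sum>s=1..t. cs_q \<beta> t s *\<^sub>R v s))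
      = (\<Sum>t=1..T. (if t < T then 1 - \<beta> else 1) * norm (\<Sum>s=1..t. \<beta> ^ (t - s) *\<^sub>R v s))"
    unfolding sum_distrib_left
  proof (intro sum.cong refl)
    fix t assume t: "t \<in> {1..T}"
    have "T * (tau_prob \<beta> T t * norm (\<Sum>s=1..t. cs_q \<beta> t s *\<^sub>R v s))
        = T * tau_prob \<beta> T t * ((1 - \<beta>) / (1 - \<beta> ^ t)) * norm (\<Sum>s=1..t. \<beta> ^ (t - s) *\<^sub>R v s)"
      unfolding sum_cs_q_scaleR using assms power_less[of t] t by simp
    also have "\<dots> = (if t < T then 1 - \<beta> else 1) * norm (\<Sum>s=1..t. \<beta> ^ (t - s) *\<^sub>R v s)"
      using t weight by simp
    finally show "T * (tau_prob \<beta> T t * norm (\<Sum>s=1..t. cs_q \<beta> t s *\<^sub>R v s))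
        = (if t < T then 1 - \<beta> else 1) * norm (\<Sum>s=1..t. \<beta> ^ (t - s) *\<^sub>R v s)" .
  qed
  also have "\<dots> = undiscount \<beta> T (\<lambda>t. norm (\<Sum>s=1..t. \<beta> ^ (t - s) *\<^sub>R v s))"
    unfolding n undiscount_def by (simp add: sum_distrib_left algebra_simps)
  finally show ?thesis .
qed

section \<open>Regret against the normalized comparator\<close>

lemma discounted_regret_eq:
  fixes g d :: "nat \<Rightarrow> 'a::real_inner"
  shows "(\<Sum>s=1..t. \<beta> ^ (t - s) * (cs_loss \<mu> (g s) (d s) - cs_loss \<mu> (g s) u))
    = (\<Sum>s=1..t. \<beta> ^ (t - s) * cs_loss \<mu> (g s) (d s)) - inner (\<Sum>s=1..t. \<beta> ^ (t - s) *\<^sub>R g s) u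
      - \<mu> / 2 * (norm u)\<^sup>2 * (\<Sum>s=1..t. \<beta> ^ (t - s))"
  by (simp add: cs_loss_def inner_sum_left sum_subtractf sum.distrib sum_distrib_left
      sum_distrib_right algebra_simps)

lemma norm_normalized_scaleR_le: "norm ((D / norm v) *\<^sub>R v) \<le> \<bar>D\<bar>"
  by (cases "v = 0") simp_all

lemma inner_normalized_scaleR: "inner v ((D / norm v) *\<^sub>R v) = D * norm v"
  by (cases "v = 0") (simp_all add: power2_norm_eq_inner[symmetric] power2_eq_square)

lemma discounted_regret_normalized_ge:
  fixes a e d :: "nat \<Rightarrow> 'a::real_inner" and t :: nat
  assumes "0 \<le> \<beta>" "0 \<le> D" "0 \<le> \<mu>"
  defines "S \<equiv> \<Sum>s=1..t. \<beta> ^ (t - s) *\<^sub>R a s"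
  shows "(\<Sum>s=1..t. \<beta> ^ (t - s) * cs_loss \<mu> (a s + e s) (d s)) + D * norm S
      - D * norm (\<Sum>s=1..t. \<beta> ^ (t - s) *\<^sub>R e s) - \<mu> / 2 * D\<^sup>2 * (\<Sum>s=1..t. \<beta> ^ (t - s))
    \<le> (\<Sum>s=1..t. \<beta> ^ (t - s) *
          (cs_loss \<mu> (a s + e s) (d s) - cs_loss \<mu> (a s + e s) (- ((D / norm S) *\<^sub>R S))))"
proof -
  define E where "E = (\<Sum>s=1..t. \<beta> ^ (t - s) *\<^sub>R e s)"
  define u where "u = - ((D / norm S) *\<^sub>R S)"
  have u_le: "norm u \<le> D" using norm_normalized_scaleR_le[of D S] assms by (simp add: u_def)
  have "inner E u \<le> norm E * norm u" by (rule norm_cauchy_schwarz)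
  also have "\<dots> \<le> D * norm E" using u_le by (metis mult.commute mult_left_mono norm_ge_zero)
  finally have "inner E u \<le> D * norm E" .
  moreover have "inner S u = - D * norm S"
    unfolding u_def inner_minus_right inner_normalized_scaleR by simp
  ultimately have inner_le: "inner (S + E) u \<le> - D * norm S + D * norm E"
    by (simp add: inner_add_left)
  have "\<mu> / 2 * (norm u)\<^sup>2 * (\<Sum>s=1..t. \<beta> ^ (t - s)) \<le> \<mu> / 2 * D\<^sup>2 * (\<Sum>s=1..t. \<beta> ^ (t - s))"
    using assms u_le by (intro mult_right_mono mult_left_mono power_mono sum_nonneg) auto
  moreover have "(\<Sum>s=1..t. \<beta> ^ (t - s) *\<^sub>R (a s + e s)) = S + E"
    by (simp add: S_def E_def scaleR_add_right sum.distrib)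
  ultimately show ?thesis
    using inner_le unfolding u_def[symmetric] discounted_regret_eq E_def[symmetric] by simp
qed

lemma tau_prob_sum_le_undiscount_regret:
  fixes a e d :: "nat \<Rightarrow> 'a::real_inner"
  assumes \<beta>: "0 \<le> \<beta>" "\<beta> < 1" and D: "0 \<le> D" and \<mu>: "0 \<le> \<mu>" and T: "1 \<le> T"
  defines "S t \<equiv> \<Sum>s=1..t. \<beta> ^ (t - s) *\<^sub>R a s"
  shows "D * T * (\<Sum>t=1..T. tau_prob \<beta> T t * norm (\<Sum>s=1..t. cs_q \<beta> t s *\<^sub>R a s))
    \<le> undiscount \<beta> T (\<lambda>t. \<Sum>s=1..t. \<beta> ^ (t - s) *
          (cs_loss \<mu> (a s + e s) (d s) - cs_loss \<mu> (a s + e s) (- ((D / norm (S t)) *\<^sub>R S t))))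
      - (\<Sum>t=1..T. cs_loss \<mu> (a t + e t) (d t))
      + D * undiscount \<beta> T (\<lambda>t. norm (\<Sum>s=1..t. \<beta> ^ (t - s) *\<^sub>R e s))
      + \<mu> / 2 * D\<^sup>2 * T"
proof -
  define L where "L t = (\<Sum>s=1..t. \<beta> ^ (t - s) * cs_loss \<mu> (a s + e s) (d s))" for t
  define E where "E t = norm (\<Sum>s=1..t. \<beta> ^ (t - s) *\<^sub>R e s)" for t
  define W where "W t = (\<Sum>s=1..t. \<beta> ^ (t - s))" for t
  have "undiscount \<beta> T (\<lambda>t. L t + D * norm (S t) - D * E t - \<mu> / 2 * D\<^sup>2 * W t)
      \<le> undiscount \<beta> T (\<lambda>t. \<Sum>s=1..t. \<beta> ^ (t - s) *
          (cs_loss \<mu> (a s + e s) (d s) - cs_loss \<mu> (a s + e s) (- ((D / norm (S t)) *\<^sub>R S t))))"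
    using \<beta> T unfolding L_def E_def W_def S_def
    by (intro undiscount_mono discounted_regret_normalized_ge D \<mu>) auto
  moreover have "undiscount \<beta> T (\<lambda>t. L t + D * norm (S t) - D * E t - \<mu> / 2 * D\<^sup>2 * W t)
      = undiscount \<beta> T L + D * undiscount \<beta> T (\<lambda>t. norm (S t)) - D * undiscount \<beta> T E
        - \<mu> / 2 * D\<^sup>2 * undiscount \<beta> T W"
    by (simp only: undiscount_add undiscount_diff undiscount_cmult)
  moreover have "undiscount \<beta> T L = (\<Sum>t=1..T. cs_loss \<mu> (a t + e t) (d t))"
    unfolding L_def by (rule undiscount_discounted_sum)
  moreover have "undiscount \<beta> T W = T"
    using undiscount_discounted_sum[of \<beta> T "\<lambda>_. 1"] by (simp add: W_def[abs_def])
  moreover have "T * (\<Sum>t=1..T. tau_prob \<beta> T t * norm (\<Sum>s=1..t. cs_q \<beta> t s *\<^sub>R a s))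
      = undiscount \<beta> T (\<lambda>t. norm (S t))"
    unfolding S_def using \<beta> T by (rule tau_prob_sum_norm_cs_q)
  ultimately show ?thesis
    unfolding E_def by (simp add: mult.assoc)
qed

section \<open>Square integrability and resampling one coordinate\<close>

lemma integrable_inner_square_integrable:
  fixes f g :: "'b \<Rightarrow> 'a::{real_inner, second_countable_topology}"
  assumes [measurable]: "f \<in> borel_measurable M" "g \<in> borel_measurable M"
    and "integrable M (\<lambda>\<omega>. (norm (f \<omega>))\<^sup>2)" "integrable M (\<lambda>\<omega>. (norm (g \<omega>))\<^sup>2)"
  shows "integrable M (\<lambda>\<omega>. inner (f \<omega>) (g \<omega>))"
proof (rule Bochner_Integration.integrable_bound)
  show "integrable M (\<lambda>\<omega>. ((norm (f \<omega>))\<^sup>2 + (norm (g \<omega>))\<^sup>2) / 2)"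
    using assms(3,4) by simp
  show "AE \<omega> in M. norm (inner (f \<omega>) (g \<omega>)) \<le> norm (((norm (f \<omega>))\<^sup>2 + (norm (g \<omega>))\<^sup>2) / 2)"
  proof (intro AE_I2)
    fix \<omega>
    have "\<bar>inner (f \<omega>) (g \<omega>)\<bar> \<le> norm (f \<omega>) * norm (g \<omega>)" by (rule Cauchy_Schwarz_ineq2)
    moreover have "0 \<le> (norm (f \<omega>) - norm (g \<omega>))\<^sup>2" by simp
    ultimately show "norm (inner (f \<omega>) (g \<omega>)) \<le> norm (((norm (f \<omega>))\<^sup>2 + (norm (g \<omega>))\<^sup>2) / 2)"
      by (simp add: power2_eq_square algebra_simps)
  qed
qed measurable

lemma (in prob_space)
  fixes f :: "'a \<Rightarrow> 'b::{banach, second_countable_topology}"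
  assumes [measurable]: "f \<in> borel_measurable M" and sq: "integrable M (\<lambda>\<omega>. (norm (f \<omega>))\<^sup>2)"
  shows integrable_norm_square_integrable: "integrable M (\<lambda>\<omega>. norm (f \<omega>))"
    and integral_norm_le_sqrt_integral_square:
      "(\<integral>\<omega>. norm (f \<omega>) \<partial>M) \<le> sqrt (\<integral>\<omega>. (norm (f \<omega>))\<^sup>2 \<partial>M)"
proof -
  show int: "integrable M (\<lambda>\<omega>. norm (f \<omega>))"
    by (rule square_integrable_imp_integrable) (use sq in auto)
  have "0 \<le> variance (\<lambda>\<omega>. norm (f \<omega>))" by (rule variance_positive)
  then have "(\<integral>\<omega>. norm (f \<omega>) \<partial>M)\<^sup>2 \<le> (\<integral>\<omega>. (norm (f \<omega>))\<^sup>2 \<partial>M)"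
    by (simp add: variance_eq[OF int sq])
  then show "(\<integral>\<omega>. norm (f \<omega>) \<partial>M) \<le> sqrt (\<integral>\<omega>. (norm (f \<omega>))\<^sup>2 \<partial>M)"
    by (rule real_le_rsqrt)
qed

lemma
  fixes e :: "'i \<Rightarrow> 'b \<Rightarrow> 'a::{real_inner, second_countable_topology}"
  assumes "finite I"
    and int: "\<And>s r. s \<in> I \<Longrightarrow> r \<in> I \<Longrightarrow> integrable M (\<lambda>\<omega>. inner (e s \<omega>) (e r \<omega>))"
    and orth: "\<And>s r. s \<in> I \<Longrightarrow> r \<in> I \<Longrightarrow> s \<noteq> r \<Longrightarrow> (\<integral>\<omega>. inner (e s \<omega>) (e r \<omega>) \<partial>M) = 0"
  shows integrable_norm_sum_orthogonal_sq: "integrable M (\<lambda>\<omega>. (norm (\<Sum>s\<in>I. c s *\<^sub>R e s \<omega>))\<^sup>2)"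
    and integral_norm_sum_orthogonal_sq: "(\<integral>\<omega>. (norm (\<Sum>s\<in>I. c s *\<^sub>R e s \<omega>))\<^sup>2 \<partial>M)
      = (\<Sum>s\<in>I. (c s)\<^sup>2 * (\<integral>\<omega>. (norm (e s \<omega>))\<^sup>2 \<partial>M))"
proof -
  have expand: "(norm (\<Sum>s\<in>I. c s *\<^sub>R e s \<omega>))\<^sup>2
      = (\<Sum>s\<in>I. \<Sum>r\<in>I. c s * c r * inner (e s \<omega>) (e r \<omega>))" for \<omega>
    unfolding power2_norm_eq_inner inner_sum_left inner_sum_right sum_distrib_left
    by (subst sum.swap) (simp add: mult_ac)
  show "integrable M (\<lambda>\<omega>. (norm (\<Sum>s\<in>I. c s *\<^sub>R e s \<omega>))\<^sup>2)"
    unfolding expand using int by auto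
  have "(\<integral>\<omega>. (norm (\<Sum>s\<in>I. c s *\<^sub>R e s \<omega>))\<^sup>2 \<partial>M)
      = (\<Sum>s\<in>I. \<Sum>r\<in>I. c s * c r * (\<integral>\<omega>. inner (e s \<omega>) (e r \<omega>) \<partial>M))"
    unfolding expand using int by (simp add: Bochner_Integration.integral_sum)
  also have "\<dots> = (\<Sum>s\<in>I. c s * c s * (\<integral>\<omega>. inner (e s \<omega>) (e s \<omega>) \<partial>M))"
  proof (intro sum.cong refl)
    fix s assume "s \<in> I"
    then show "(\<Sum>r\<in>I. c s * c r * (\<integral>\<omega>. inner (e s \<omega>) (e r \<omega>) \<partial>M))
        = c s * c s * (\<integral>\<omega>. inner (e s \<omega>) (e s \<omega>) \<partial>M)"
      using \<open>finite I\<close> orth[of s] by (subst sum.remove[of I s]) (auto intro!: sum.neutral, metis)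
  qed
  finally show "(\<integral>\<omega>. (norm (\<Sum>s\<in>I. c s *\<^sub>R e s \<omega>))\<^sup>2 \<partial>M)
      = (\<Sum>s\<in>I. (c s)\<^sup>2 * (\<integral>\<omega>. (norm (e s \<omega>))\<^sup>2 \<partial>M))"
    by (simp add: power2_eq_square flip: power2_norm_eq_inner)
qed

lemma measurable_PiM_fun_upd:
  "(\<lambda>(z, \<omega>). \<omega> (r := z)) \<in> measurable (K \<Otimes>\<^sub>M (\<Pi>\<^sub>M i\<in>UNIV. K)) (\<Pi>\<^sub>M i\<in>UNIV. K)"
proof -
  have "(\<lambda>p. (snd p) (r := fst p)) \<in> measurable (K \<Otimes>\<^sub>M (\<Pi>\<^sub>M i\<in>UNIV. K)) (\<Pi>\<^sub>M i\<in>UNIV. K)"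
    by (rule measurable_fun_upd[where J=UNIV]) auto
  then show ?thesis by (simp add: case_prod_beta')
qed

text \<open>This replaces
  conditioning on the past: a round-\<open>r\<close> quantity is averaged over a fresh round-\<open>r\<close> sample while
  everything decided before round \<open>r\<close> stays fixed.\<close>

lemma distr_PiM_fun_upd:
  assumes "prob_space K"
  shows "distr (K \<Otimes>\<^sub>M (\<Pi>\<^sub>M i\<in>UNIV. K)) (\<Pi>\<^sub>M i\<in>UNIV. K) (\<lambda>(z, \<omega>). \<omega> (r := z)) = (\<Pi>\<^sub>M i\<in>UNIV. K)"
  using distr_pair_PiM_eq_PiM[of UNIV "\<lambda>_. K" r] assms by simp

lemma integral_PiM_fun_upd:
  fixes h :: "('i \<Rightarrow> 'a) \<Rightarrow> 'b::{banach, second_countable_topology}"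
  assumes K: "prob_space K" and h: "integrable (\<Pi>\<^sub>M i\<in>UNIV. K) h"
  shows "(\<integral>\<omega>. h \<omega> \<partial>(\<Pi>\<^sub>M i\<in>UNIV. K)) = (\<integral>\<omega>. (\<integral>z. h (\<omega> (r := z)) \<partial>K) \<partial>(\<Pi>\<^sub>M i\<in>UNIV. K))"
proof -
  let ?M = "\<Pi>\<^sub>M i\<in>UNIV. K"
  interpret K: prob_space K by (rule K)
  interpret M: prob_space ?M by (rule prob_space_PiM) (rule K)
  interpret KM: pair_sigma_finite K ?M ..
  note measurable_PiM_fun_upd[where r=r and K=K, measurable]
  note distr = distr_PiM_fun_upd[OF K, of r]
  have [measurable]: "h \<in> borel_measurable ?M" using h by auto
  have "integrable (distr (K \<Otimes>\<^sub>M ?M) ?M (\<lambda>(z, \<omega>). \<omega> (r := z))) h"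
    using h by (simp only: distr)
  then have int: "integrable (K \<Otimes>\<^sub>M ?M) (\<lambda>(z, \<omega>). h (\<omega> (r := z)))"
    by (subst (asm) integrable_distr_eq) (auto simp: case_prod_beta')
  have "(\<integral>\<omega>. h \<omega> \<partial>?M) = (\<integral>p. h ((\<lambda>(z, \<omega>). \<omega> (r := z)) p) \<partial>(K \<Otimes>\<^sub>M ?M))"
    by (subst (1) distr[symmetric], rule integral_distr) auto
  also have "\<dots> = (\<integral>\<omega>. (\<integral>z. h (\<omega> (r := z)) \<partial>K) \<partial>?M)"
    using KM.integral_snd[of "\<lambda>z \<omega>. h (\<omega> (r := z))"] int by (simp add: case_prod_beta')
  finally show ?thesis .
qed

lemma nn_integral_PiM_fun_upd:
  assumes K: "prob_space K" and [measurable]: "h \<in> borel_measurable (\<Pi>\<^sub>M i\<in>UNIV. K)"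
  shows "(\<integral>\<^sup>+\<omega>. h \<omega> \<partial>(\<Pi>\<^sub>M i\<in>UNIV. K)) = (\<integral>\<^sup>+\<omega>. (\<integral>\<^sup>+z. h (\<omega> (r := z)) \<partial>K) \<partial>(\<Pi>\<^sub>M i\<in>UNIV. K))"
proof -
  let ?M = "\<Pi>\<^sub>M i\<in>UNIV. K"
  interpret K: prob_space K by (rule K)
  interpret M: prob_space ?M by (rule prob_space_PiM) (rule K)
  interpret KM: pair_sigma_finite K ?M ..
  note measurable_PiM_fun_upd[where r=r and K=K, measurable]
  note distr = distr_PiM_fun_upd[OF K, of r]
  have "(\<integral>\<^sup>+\<omega>. h \<omega> \<partial>?M) = (\<integral>\<^sup>+p. h ((\<lambda>(z, \<omega>). \<omega> (r := z)) p) \<partial>(K \<Otimes>\<^sub>M ?M))"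
    by (subst (1) distr[symmetric], rule nn_integral_distr) auto
  also have "\<dots> = (\<integral>\<^sup>+\<omega>. (\<integral>\<^sup>+z. h (\<omega> (r := z)) \<partial>K) \<partial>?M)"
    by (subst KM.nn_integral_snd[symmetric]) (auto simp: case_prod_beta')
  finally show ?thesis .
qed

lemma integral_uniform_unit_interval:
  fixes f :: "real \<Rightarrow> real"
  assumes [measurable]: "f \<in> borel_measurable borel" and bound: "\<And>s. s \<in> {0..1} \<Longrightarrow> \<bar>f s\<bar> \<le> B"
    and "(f has_integral I) {0..1}"
  shows "(\<integral>s. f s \<partial>uniform_measure lborel {0..1}) = I"
proof -
  have "uniform_measure lborel {0..1::real} = density lborel (\<lambda>s. ennreal (indicator {0..1} s))"
    unfolding uniform_measure_def by (intro density_cong) (auto simp: indicator_def)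
  then have "(\<integral>s. f s \<partial>uniform_measure lborel {0..1}) = (LINT s:{0..1}|lborel. f s)"
    by (simp add: integral_density set_lebesgue_integral_def)
  also have "\<dots> = integral {0..1} f"
    by (intro set_borel_integral_eq_integral
        integrableI_bounded_set_indicator[where B=B, folded set_integrable_def])
      (auto simp: bound)
  also have "\<dots> = I" using assms(3) by (rule integral_unique)
  finally show ?thesis .
qed
section \<open>The conversion scheme\<close>

locale conversion_scheme =
  fixes F :: "'a::euclidean_space \<Rightarrow> real"
    and gradF :: "'a \<Rightarrow> 'a"
    and G \<sigma> :: real
    and N :: "'w measure"
    and orc :: "'a \<Rightarrow> 'w \<Rightarrow> 'a"
    and A :: "nat \<Rightarrow> (nat \<Rightarrow> 'a) \<Rightarrow> 'a"
    and x \<Delta> :: "nat \<Rightarrow> (nat \<Rightarrow> real \<times> 'w) \<Rightarrow> 'a"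
  assumes ftc: "\<And>z v. ((\<lambda>r. inner (gradF (v + r *\<^sub>R (z - v))) (z - v))
      has_integral (F z - F v)) {0..1}"
    and gradbd: "\<And>z. norm (gradF z) \<le> G"
    and N_prob: "prob_space N"
    and orc_meas: "(\<lambda>p. orc (fst p) (snd p)) \<in> borel_measurable (borel \<Otimes>\<^sub>M N)"
    and orc_int: "\<And>z. integrable N (orc z)"
    and orc_unbiased: "\<And>z. (\<integral>\<xi>. orc z \<xi> \<partial>N) = gradF z"
    and orc_var_int: "\<And>z. integrable N (\<lambda>\<xi>. (norm (orc z \<xi> - gradF z))\<^sup>2)"
    and orc_var: "\<And>z. (\<integral>\<xi>. (norm (orc z \<xi> - gradF z))\<^sup>2 \<partial>N) \<le> \<sigma>\<^sup>2"
    and sigma: "\<sigma> \<ge> 0"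
    and learner: "\<And>t \<omega>. 1 \<le> t \<Longrightarrow>
        \<Delta> t \<omega> = A t (\<lambda>i. if 1 \<le> i \<and> i < t then cs_g orc x \<Delta> i \<omega> else 0)"
    and x_adapted: "\<And>t \<omega> \<omega>'. 1 \<le> t \<Longrightarrow> (\<forall>i. 1 \<le> i \<and> i < t \<longrightarrow> \<omega> i = \<omega>' i) \<Longrightarrow>
        x t \<omega> = x t \<omega>'"
    and x_meas: "\<And>t. 1 \<le> t \<Longrightarrow> x t \<in> borel_measurable (conv_space N)"
    and \<Delta>_meas: "\<And>t. 1 \<le> t \<Longrightarrow> \<Delta> t \<in> borel_measurable (conv_space N)"
begin

abbreviation "U \<equiv> uniform_measure lborel {0..1::real}"
abbreviation "K \<equiv> U \<Otimes>\<^sub>M N"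
abbreviation "M \<equiv> conv_space N"

lemma prob_space_U: "prob_space U"
  by (rule prob_space_uniform_measure) auto

lemma prob_space_K: "prob_space K"
  by (rule prob_space_pair[OF prob_space_U N_prob])

lemma M_eq_PiM: "M = (\<Pi>\<^sub>M i\<in>UNIV. K)"
  by (simp add: conv_space_def)

lemma prob_space_M: "prob_space M"
  unfolding M_eq_PiM by (rule prob_space_PiM) (rule prob_space_K)

lemma integral_M_fun_upd:
  fixes h :: "(nat \<Rightarrow> real \<times> 'w) \<Rightarrow> 'b::{banach, second_countable_topology}"
  shows "integrable M h \<Longrightarrow> (\<integral>\<omega>. h \<omega> \<partial>M) = (\<integral>\<omega>. (\<integral>z. h (\<omega> (r := z)) \<partial>K) \<partial>M)"
  unfolding M_eq_PiM by (rule integral_PiM_fun_upd[OF prob_space_K])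

lemma nn_integral_M_fun_upd:
  "h \<in> borel_measurable M \<Longrightarrow> (\<integral>\<^sup>+\<omega>. h \<omega> \<partial>M) = (\<integral>\<^sup>+\<omega>. (\<integral>\<^sup>+z. h (\<omega> (r := z)) \<partial>K) \<partial>M)"
  unfolding M_eq_PiM by (rule nn_integral_PiM_fun_upd[OF prob_space_K])

lemma integral_K_fst:
  fixes f :: "real \<Rightarrow> 'b::{banach, second_countable_topology}"
  assumes [measurable]: "f \<in> borel_measurable borel"
  shows "(\<integral>z. f (fst z) \<partial>K) = (\<integral>s. f s \<partial>U)"
proof -
  interpret N: prob_space N by (rule N_prob)
  have "(\<integral>z. f (fst z) \<partial>K) = integral\<^sup>L (distr K U fst) f"
    by (rule integral_distr[symmetric]) auto
  then show ?thesis by (simp add: N.distr_pair_fst)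
qed

lemma measurable_gradF[measurable]: "gradF \<in> borel_measurable borel"
proof -
  interpret N: prob_space N by (rule N_prob)
  have "(\<lambda>z. \<integral>\<xi>. orc z \<xi> \<partial>N) \<in> borel_measurable borel"
    by (rule N.borel_measurable_lebesgue_integral) (use orc_meas in \<open>simp add: case_prod_beta'\<close>)
  then show ?thesis by (simp add: orc_unbiased)
qed

lemma measurable_round[measurable]: "(\<lambda>\<omega>. \<omega> t) \<in> measurable M K"
  unfolding M_eq_PiM by (rule measurable_component_singleton) simp

lemma measurable_round_fst[measurable]: "(\<lambda>\<omega>. fst (\<omega> t)) \<in> borel_measurable M"
proof -
  have "measurable K U = measurable K borel" by (rule measurable_cong_sets) auto
  then have "fst \<in> borel_measurable K" using measurable_fst[of U N] by simp
  then show ?thesis by (rule measurable_compose[OF measurable_round])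
qed

lemma measurable_round_snd[measurable]: "(\<lambda>\<omega>. snd (\<omega> t)) \<in> measurable M N"
  by (rule measurable_compose[OF measurable_round measurable_snd])

lemma measurable_y: "1 \<le> t \<Longrightarrow> cs_y x \<Delta> t \<in> borel_measurable M"
  using x_meas[of t] \<Delta>_meas[of t] unfolding cs_y_def[abs_def] by measurable

lemma measurable_w: "1 \<le> t \<Longrightarrow> cs_w x \<Delta> t \<in> borel_measurable M"
  using x_meas[of t] \<Delta>_meas[of t] unfolding cs_w_def[abs_def] by measurable

lemma measurable_g: "1 \<le> t \<Longrightarrow> cs_g orc x \<Delta> t \<in> borel_measurable M"
  using measurable_compose[OF measurable_Pair[OF measurable_y measurable_round_snd] orc_meas]
  by (simp add: cs_g_def[abs_def])

lemma \<Delta>_adapted: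
  "1 \<le> t \<Longrightarrow> (\<forall>i. 1 \<le> i \<and> i < t \<longrightarrow> \<omega> i = \<omega>' i) \<Longrightarrow> \<Delta> t \<omega> = \<Delta> t \<omega>'"
proof (induction t rule: less_induct)
  case (less t)
  have "cs_g orc x \<Delta> i \<omega> = cs_g orc x \<Delta> i \<omega>'" if "1 \<le> i" "i < t" for i
  proof -
    have agree: "\<forall>j. 1 \<le> j \<and> j < i \<longrightarrow> \<omega> j = \<omega>' j" using less.prems that by auto
    then have "x i \<omega> = x i \<omega>'" "\<Delta> i \<omega> = \<Delta> i \<omega>'"
      using x_adapted less.IH that by auto
    moreover have "\<omega> i = \<omega>' i" using less.prems that by auto
    ultimately show ?thesis by (simp add: cs_g_def cs_y_def)
  qed
  then have "(\<lambda>i. if 1 \<le> i \<and> i < t then cs_g orc x \<Delta> i \<omega> else 0)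
      = (\<lambda>i. if 1 \<le> i \<and> i < t then cs_g orc x \<Delta> i \<omega>' else 0)"
    by auto
  then show ?case using learner[of t] less.prems by simp
qed

lemma x_fun_upd: "1 \<le> t \<Longrightarrow> t \<le> r \<Longrightarrow> x t (\<omega> (r := z)) = x t \<omega>"
  by (rule x_adapted) auto

lemma \<Delta>_fun_upd: "1 \<le> t \<Longrightarrow> t \<le> r \<Longrightarrow> \<Delta> t (\<omega> (r := z)) = \<Delta> t \<omega>"
  by (rule \<Delta>_adapted) auto

lemma y_fun_upd: "1 \<le> s \<Longrightarrow> s < r \<Longrightarrow> cs_y x \<Delta> s (\<omega> (r := z)) = cs_y x \<Delta> s \<omega>"
  by (simp add: cs_y_def \<Delta>_fun_upd x_fun_upd)

lemma y_fun_upd_self: "1 \<le> r \<Longrightarrow> cs_y x \<Delta> r (\<omega> (r := z)) = x r \<omega> + fst z *\<^sub>R \<Delta> r \<omega>"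
  by (simp add: cs_y_def \<Delta>_fun_upd x_fun_upd)

definition noise :: "nat \<Rightarrow> (nat \<Rightarrow> real \<times> 'w) \<Rightarrow> 'a" where
  "noise t \<omega> = cs_g orc x \<Delta> t \<omega> - gradF (cs_y x \<Delta> t \<omega>)"

lemma measurable_noise: "1 \<le> t \<Longrightarrow> noise t \<in> borel_measurable M"
  using measurable_g[of t] measurable_y[of t] unfolding noise_def[abs_def] by measurable

lemma noise_fun_upd: "1 \<le> s \<Longrightarrow> s < r \<Longrightarrow> noise s (\<omega> (r := z)) = noise s \<omega>"
  by (simp add: noise_def cs_g_def y_fun_upd)

lemma noise_fun_upd_self: "1 \<le> r \<Longrightarrow> noise r (\<omega> (r := z)) =
    orc (x r \<omega> + fst z *\<^sub>R \<Delta> r \<omega>) (snd z) - gradF (x r \<omega> + fst z *\<^sub>R \<Delta> r \<omega>)"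
  by (simp add: noise_def cs_g_def y_fun_upd_self)

lemma nn_integral_oracle_error_sq_le:
  "(\<integral>\<^sup>+z. ennreal ((norm (orc (a + fst z *\<^sub>R b) (snd z) - gradF (a + fst z *\<^sub>R b)))\<^sup>2) \<partial>K)
    \<le> ennreal (\<sigma>\<^sup>2)"
proof -
  interpret N: prob_space N by (rule N_prob)
  interpret U: prob_space U by (rule prob_space_U)
  have "(\<lambda>z. (a + fst z *\<^sub>R b, snd z)) \<in> measurable K (borel \<Otimes>\<^sub>M N)"
    by measurable
  from measurable_compose[OF this orc_meas]
  have [measurable]: "(\<lambda>z. orc (a + fst z *\<^sub>R b) (snd z)) \<in> borel_measurable K" by simp
  have "(\<integral>\<^sup>+z. ennreal ((norm (orc (a + fst z *\<^sub>R b) (snd z) - gradF (a + fst z *\<^sub>R b)))\<^sup>2) \<partial>K)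
      = (\<integral>\<^sup>+s. (\<integral>\<^sup>+\<xi>. ennreal ((norm (orc (a + s *\<^sub>R b) \<xi> - gradF (a + s *\<^sub>R b)))\<^sup>2) \<partial>N) \<partial>U)"
    by (subst N.nn_integral_fst[symmetric]) auto
  also have "\<dots> \<le> (\<integral>\<^sup>+s. ennreal (\<sigma>\<^sup>2) \<partial>U)"
  proof (intro nn_integral_mono)
    fix s
    have "(\<integral>\<^sup>+\<xi>. ennreal ((norm (orc (a + s *\<^sub>R b) \<xi> - gradF (a + s *\<^sub>R b)))\<^sup>2) \<partial>N)
        = ennreal (\<integral>\<xi>. (norm (orc (a + s *\<^sub>R b) \<xi> - gradF (a + s *\<^sub>R b)))\<^sup>2 \<partial>N)"
      by (rule nn_integral_eq_integral[OF orc_var_int]) auto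
    then show "(\<integral>\<^sup>+\<xi>. ennreal ((norm (orc (a + s *\<^sub>R b) \<xi> - gradF (a + s *\<^sub>R b)))\<^sup>2) \<partial>N)
        \<le> ennreal (\<sigma>\<^sup>2)"
      using orc_var by (simp add: ennreal_leI)
  qed
  also have "\<dots> = ennreal (\<sigma>\<^sup>2)" by (simp add: U.emeasure_space_1)
  finally show ?thesis .
qed

lemma integral_inner_oracle_error:
  "(\<integral>z. inner (orc (a + fst z *\<^sub>R b) (snd z) - gradF (a + fst z *\<^sub>R b)) v \<partial>K) = 0"
proof (cases "integrable K (\<lambda>z. inner (orc (a + fst z *\<^sub>R b) (snd z) - gradF (a + fst z *\<^sub>R b)) v)")
  case True
  interpret N: prob_space N by (rule N_prob)
  interpret U: prob_space U by (rule prob_space_U)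
  interpret UN: pair_sigma_finite U N ..
  have centered: "(\<integral>\<xi>. inner (orc c \<xi> - gradF c) v \<partial>N) = 0" for c
    using orc_int[of c] by (simp add: orc_unbiased N.prob_space)
  show ?thesis
    using UN.integral_fst'[OF True] by (simp add: centered)
qed (rule not_integrable_integral_eq)

lemma
  assumes "1 \<le> t"
  shows integrable_noise_sq: "integrable M (\<lambda>\<omega>. (norm (noise t \<omega>))\<^sup>2)"
    and integral_noise_sq_le: "(\<integral>\<omega>. (norm (noise t \<omega>))\<^sup>2 \<partial>M) \<le> \<sigma>\<^sup>2"
proof -
  interpret M: prob_space M by (rule prob_space_M)
  have [measurable]: "noise t \<in> borel_measurable M" by (rule measurable_noise[OF assms])
  have "(\<integral>\<^sup>+\<omega>. ennreal ((norm (noise t \<omega>))\<^sup>2) \<partial>M)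
      = (\<integral>\<^sup>+\<omega>. (\<integral>\<^sup>+z. ennreal ((norm (noise t (\<omega> (t := z))))\<^sup>2) \<partial>K) \<partial>M)"
    by (rule nn_integral_M_fun_upd) measurable
  also have "\<dots> \<le> (\<integral>\<^sup>+\<omega>. ennreal (\<sigma>\<^sup>2) \<partial>M)"
    by (intro nn_integral_mono)
      (simp add: noise_fun_upd_self[OF assms] nn_integral_oracle_error_sq_le)
  also have "\<dots> = ennreal (\<sigma>\<^sup>2)" by (simp add: M.emeasure_space_1)
  finally have nn: "(\<integral>\<^sup>+\<omega>. ennreal ((norm (noise t \<omega>))\<^sup>2) \<partial>M) \<le> ennreal (\<sigma>\<^sup>2)" .
  show int: "integrable M (\<lambda>\<omega>. (norm (noise t \<omega>))\<^sup>2)"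
    using le_less_trans[OF nn ennreal_less_top] by (intro integrableI_bounded) simp_all
  show "(\<integral>\<omega>. (norm (noise t \<omega>))\<^sup>2 \<partial>M) \<le> \<sigma>\<^sup>2"
    using nn by (simp add: nn_integral_eq_integral[OF int])
qed

lemma
  assumes r: "1 \<le> r" and V_meas: "V \<in> borel_measurable M"
    and V_sq: "integrable M (\<lambda>\<omega>. (norm (V \<omega>))\<^sup>2)"
    and V_upd: "\<And>\<omega> z. V (\<omega> (r := z)) = V \<omega>"
  shows integrable_inner_noise: "integrable M (\<lambda>\<omega>. inner (noise r \<omega>) (V \<omega>))"
    and integral_inner_noise_eq_0: "(\<integral>\<omega>. inner (noise r \<omega>) (V \<omega>) \<partial>M) = 0"
proof -
  show int: "integrable M (\<lambda>\<omega>. inner (noise r \<omega>) (V \<omega>))"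
    by (rule integrable_inner_square_integrable[OF measurable_noise[OF r] V_meas
          integrable_noise_sq[OF r] V_sq])
  have "(\<integral>\<omega>. inner (noise r \<omega>) (V \<omega>) \<partial>M)
      = (\<integral>\<omega>. (\<integral>z. inner (noise r (\<omega> (r := z))) (V (\<omega> (r := z))) \<partial>K) \<partial>M)"
    by (rule integral_M_fun_upd[OF int])
  also have "\<dots> = 0"
    by (simp add: noise_fun_upd_self[OF r] V_upd integral_inner_oracle_error)
  finally show "(\<integral>\<omega>. inner (noise r \<omega>) (V \<omega>) \<partial>M) = 0" .
qed

lemma noise_orthogonal:
  assumes "1 \<le> s" "1 \<le> r" "s \<noteq> r"
  shows "(\<integral>\<omega>. inner (noise s \<omega>) (noise r \<omega>) \<partial>M) = 0"
proof (cases "s < r")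
  case True
  then have "(\<integral>\<omega>. inner (noise r \<omega>) (noise s \<omega>) \<partial>M) = 0"
    using assms
    by (intro integral_inner_noise_eq_0 measurable_noise integrable_noise_sq noise_fun_upd)
  then show ?thesis by (simp add: inner_commute)
next
  case False
  then show ?thesis
    using assms
    by (intro integral_inner_noise_eq_0 measurable_noise integrable_noise_sq noise_fun_upd) auto
qed

lemma
  assumes \<beta>: "0 \<le> \<beta>" "\<beta> < 1"
  shows integrable_norm_discounted_noise:
      "integrable M (\<lambda>\<omega>. norm (\<Sum>s=1..t. \<beta> ^ (t - s) *\<^sub>R noise s \<omega>))"
    and integral_norm_discounted_noise_le:
      "(\<integral>\<omega>. norm (\<Sum>s=1..t. \<beta> ^ (t - s) *\<^sub>R noise s \<omega>) \<partial>M) \<le> \<sigma> / sqrt (1 - \<beta>)"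
proof -
  interpret M: prob_space M by (rule prob_space_M)
  have cross_int: "integrable M (\<lambda>\<omega>. inner (noise s \<omega>) (noise r \<omega>))"
    if "s \<in> {1..t}" "r \<in> {1..t}" for s r
    using that by (intro integrable_inner_square_integrable measurable_noise integrable_noise_sq) auto
  note sum_sq_int = integrable_norm_sum_orthogonal_sq[of "{1..t}" M noise, OF _ cross_int]
  note sum_sq_eq = integral_norm_sum_orthogonal_sq[of "{1..t}" M noise, OF _ cross_int]
  have [measurable]: "(\<lambda>\<omega>. \<Sum>s=1..t. \<beta> ^ (t - s) *\<^sub>R noise s \<omega>) \<in> borel_measurable M"
    using measurable_noise by (intro borel_measurable_sum borel_measurable_scaleR) auto
  have sq_int: "integrable M (\<lambda>\<omega>. (norm (\<Sum>s=1..t. \<beta> ^ (t - s) *\<^sub>R noise s \<omega>))\<^sup>2)"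
    using sum_sq_int noise_orthogonal by auto
  show "integrable M (\<lambda>\<omega>. norm (\<Sum>s=1..t. \<beta> ^ (t - s) *\<^sub>R noise s \<omega>))"
    by (rule M.integrable_norm_square_integrable[OF _ sq_int]) measurable
  have "(\<integral>\<omega>. (norm (\<Sum>s=1..t. \<beta> ^ (t - s) *\<^sub>R noise s \<omega>))\<^sup>2 \<partial>M)
      = (\<Sum>s=1..t. (\<beta> ^ (t - s))\<^sup>2 * (\<integral>\<omega>. (norm (noise s \<omega>))\<^sup>2 \<partial>M))"
    using sum_sq_eq noise_orthogonal by auto
  also have "\<dots> \<le> (\<Sum>s=1..t. \<beta> ^ (t - s) * \<sigma>\<^sup>2)"
  proof (intro sum_mono mult_mono)
    fix s assume "s \<in> {1..t}"
    then show "(\<integral>\<omega>. (norm (noise s \<omega>))\<^sup>2 \<partial>M) \<le> \<sigma>\<^sup>2" by (simp add: integral_noise_sq_le)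
    show "(\<beta> ^ (t - s))\<^sup>2 \<le> \<beta> ^ (t - s)"
      using \<beta> by (simp add: power2_eq_square mult_left_le_one_le power_le_one)
  qed (use \<beta> in auto)
  also have "\<dots> = \<sigma>\<^sup>2 * (\<Sum>s=1..t. \<beta> ^ (t - s))"
    by (simp add: sum_distrib_left mult.commute)
  also have "\<dots> \<le> \<sigma>\<^sup>2 * (1 / (1 - \<beta>))"
    using discounted_geometric_sum_le[OF \<beta>] by (intro mult_left_mono) auto
  finally have sq_le: "(\<integral>\<omega>. (norm (\<Sum>s=1..t. \<beta> ^ (t - s) *\<^sub>R noise s \<omega>))\<^sup>2 \<partial>M) \<le> \<sigma>\<^sup>2 / (1 - \<beta>)"
    by simp
  have "(\<integral>\<omega>. norm (\<Sum>s=1..t. \<beta> ^ (t - s) *\<^sub>R noise s \<omega>) \<partial>M)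
      \<le> sqrt (\<integral>\<omega>. (norm (\<Sum>s=1..t. \<beta> ^ (t - s) *\<^sub>R noise s \<omega>))\<^sup>2 \<partial>M)"
    by (rule M.integral_norm_le_sqrt_integral_square[OF _ sq_int]) measurable
  also have "\<dots> \<le> sqrt (\<sigma>\<^sup>2 / (1 - \<beta>))"
    using sq_le by (rule real_sqrt_le_mono)
  also have "\<dots> = \<sigma> / sqrt (1 - \<beta>)"
    using sigma by (simp add: real_sqrt_divide)
  finally show "(\<integral>\<omega>. norm (\<Sum>s=1..t. \<beta> ^ (t - s) *\<^sub>R noise s \<omega>) \<partial>M) \<le> \<sigma> / sqrt (1 - \<beta>)" .
qed

lemma G_nonneg: "0 \<le> G"
  using gradbd[of 0] norm_ge_zero order_trans by blast

lemma abs_inner_gradF_le: "\<bar>inner (gradF p) h\<bar> \<le> G * norm h"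
  using Cauchy_Schwarz_ineq2[of "gradF p" h] gradbd[of p]
  by (metis mult_right_mono norm_ge_zero order_trans)

lemma F_lipschitz: "\<bar>F z - F v\<bar> \<le> G * norm (z - v)"
proof -
  have "norm (F z - F v) \<le> G * norm (z - v) * Henstock_Kurzweil_Integration.content {0..1::real}"
    by (rule has_integral_bound_real[OF _ _ ftc]) (auto simp: abs_inner_gradF_le G_nonneg)
  then show ?thesis by simp
qed

lemma measurable_F[measurable]: "F \<in> borel_measurable borel"
proof -
  have "G-lipschitz_on UNIV F"
    using F_lipschitz G_nonneg by (intro lipschitz_onI) (auto simp: dist_norm)
  then show ?thesis by (intro borel_measurable_continuous_onI lipschitz_on_continuous_on)
qed

lemma integral_K_inner_gradF: "(\<integral>z. inner (gradF (a + fst z *\<^sub>R b)) b \<partial>K) = F (a + b) - F a"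
proof -
  have "(\<integral>z. inner (gradF (a + fst z *\<^sub>R b)) b \<partial>K) = (\<integral>s. inner (gradF (a + s *\<^sub>R b)) b \<partial>U)"
    by (rule integral_K_fst) measurable
  also have "\<dots> = F (a + b) - F a"
  proof (rule integral_uniform_unit_interval)
    show "(\<lambda>s. inner (gradF (a + s *\<^sub>R b)) b) \<in> borel_measurable borel" by measurable
    show "\<bar>inner (gradF (a + s *\<^sub>R b)) b\<bar> \<le> G * norm b" for s by (rule abs_inner_gradF_le)
    show "((\<lambda>s. inner (gradF (a + s *\<^sub>R b)) b) has_integral F (a + b) - F a) {0..1}"
      using ftc[where z="a + b" and v=a] by simp
  qed
  finally show ?thesis .
qed

lemma
  assumes t: "1 \<le> t" and \<Delta>_sq: "integrable M (\<lambda>\<omega>. (norm (\<Delta> t \<omega>))\<^sup>2)"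
  shows integrable_inner_gradF_step: "integrable M (\<lambda>\<omega>. inner (gradF (cs_y x \<Delta> t \<omega>)) (\<Delta> t \<omega>))"
    and integrable_F_step: "integrable M (\<lambda>\<omega>. F (cs_w x \<Delta> t \<omega>) - F (x t \<omega>))"
    and integral_inner_gradF_step: "(\<integral>\<omega>. inner (gradF (cs_y x \<Delta> t \<omega>)) (\<Delta> t \<omega>) \<partial>M)
      = (\<integral>\<omega>. F (cs_w x \<Delta> t \<omega>) - F (x t \<omega>) \<partial>M)"
proof -
  interpret M: prob_space M by (rule prob_space_M)
  have [measurable]: "x t \<in> borel_measurable M" "\<Delta> t \<in> borel_measurable M"
    "cs_y x \<Delta> t \<in> borel_measurable M" "cs_w x \<Delta> t \<in> borel_measurable M"
    using t x_meas \<Delta>_meas measurable_y measurable_w by auto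
  have bound: "integrable M (\<lambda>\<omega>. G * norm (\<Delta> t \<omega>))"
    using M.integrable_norm_square_integrable[OF _ \<Delta>_sq] by simp
  show int: "integrable M (\<lambda>\<omega>. inner (gradF (cs_y x \<Delta> t \<omega>)) (\<Delta> t \<omega>))"
    by (rule Bochner_Integration.integrable_bound[OF bound])
      (auto simp: abs_inner_gradF_le G_nonneg)
  have "\<bar>F (cs_w x \<Delta> t \<omega>) - F (x t \<omega>)\<bar> \<le> G * norm (\<Delta> t \<omega>)" for \<omega>
    using F_lipschitz[of "x t \<omega> + \<Delta> t \<omega>" "x t \<omega>"] by (simp add: cs_w_def)
  then show "integrable M (\<lambda>\<omega>. F (cs_w x \<Delta> t \<omega>) - F (x t \<omega>))"
    by (intro Bochner_Integration.integrable_bound[OF bound]) (auto simp: G_nonneg)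
  have "(\<integral>\<omega>. inner (gradF (cs_y x \<Delta> t \<omega>)) (\<Delta> t \<omega>) \<partial>M)
     = (\<integral>\<omega>. (\<integral>z. inner (gradF (cs_y x \<Delta> t (\<omega> (t := z)))) (\<Delta> t (\<omega> (t := z))) \<partial>K) \<partial>M)"
    by (rule integral_M_fun_upd[OF int])
  also have "\<dots> = (\<integral>\<omega>. F (cs_w x \<Delta> t \<omega>) - F (x t \<omega>) \<partial>M)"
    by (simp add: y_fun_upd_self[OF t] \<Delta>_fun_upd[OF t] integral_K_inner_gradF cs_w_def)
  finally show "(\<integral>\<omega>. inner (gradF (cs_y x \<Delta> t \<omega>)) (\<Delta> t \<omega>) \<partial>M)
      = (\<integral>\<omega>. F (cs_w x \<Delta> t \<omega>) - F (x t \<omega>) \<partial>M)" .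
qed

lemma g_eq_gradF_plus_noise: "cs_g orc x \<Delta> t \<omega> = gradF (cs_y x \<Delta> t \<omega>) + noise t \<omega>"
  by (simp add: noise_def)

lemma
  assumes t: "1 \<le> t" and \<Delta>_sq: "integrable M (\<lambda>\<omega>. (norm (\<Delta> t \<omega>))\<^sup>2)"
  shows integrable_cs_loss: "integrable M (\<lambda>\<omega>. cs_loss \<mu> (cs_g orc x \<Delta> t \<omega>) (\<Delta> t \<omega>))"
    and integral_cs_loss: "(\<integral>\<omega>. cs_loss \<mu> (cs_g orc x \<Delta> t \<omega>) (\<Delta> t \<omega>) \<partial>M)
      = (\<integral>\<omega>. F (cs_w x \<Delta> t \<omega>) - F (x t \<omega>) \<partial>M) + \<mu> / 2 * (\<integral>\<omega>. (norm (\<Delta> t \<omega>))\<^sup>2 \<partial>M)"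
proof -
  have loss_eq: "cs_loss \<mu> (cs_g orc x \<Delta> t \<omega>) (\<Delta> t \<omega>) = inner (gradF (cs_y x \<Delta> t \<omega>)) (\<Delta> t \<omega>)
      + inner (noise t \<omega>) (\<Delta> t \<omega>) + \<mu> / 2 * (norm (\<Delta> t \<omega>))\<^sup>2" for \<omega>
    by (simp add: cs_loss_def g_eq_gradF_plus_noise inner_add_left)
  have \<Delta>_upd: "\<And>\<omega> z. \<Delta> t (\<omega> (t := z)) = \<Delta> t \<omega>" using \<Delta>_fun_upd[OF t order_refl] .
  note noise = integrable_inner_noise[OF t \<Delta>_meas[OF t] \<Delta>_sq \<Delta>_upd]
    integral_inner_noise_eq_0[OF t \<Delta>_meas[OF t] \<Delta>_sq \<Delta>_upd]
  note step = integrable_inner_gradF_step[OF t \<Delta>_sq] integral_inner_gradF_step[OF t \<Delta>_sq]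
  show "integrable M (\<lambda>\<omega>. cs_loss \<mu> (cs_g orc x \<Delta> t \<omega>) (\<Delta> t \<omega>))"
    unfolding loss_eq using step(1) noise(1) \<Delta>_sq by simp
  show "(\<integral>\<omega>. cs_loss \<mu> (cs_g orc x \<Delta> t \<omega>) (\<Delta> t \<omega>) \<partial>M)
      = (\<integral>\<omega>. F (cs_w x \<Delta> t \<omega>) - F (x t \<omega>) \<partial>M) + \<mu> / 2 * (\<integral>\<omega>. (norm (\<Delta> t \<omega>))\<^sup>2 \<partial>M)"
    unfolding loss_eq using step noise \<Delta>_sq by simp
qed

lemma integrable_gradF_y: "1 \<le> t \<Longrightarrow> integrable M (\<lambda>\<omega>. gradF (cs_y x \<Delta> t \<omega>))"
proof -
  assume "1 \<le> t"
  interpret M: prob_space M by (rule prob_space_M)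
  show ?thesis
    using measurable_compose[OF measurable_y[OF \<open>1 \<le> t\<close>] measurable_gradF] gradbd
    by (intro M.integrable_const_bound[where B=G]) auto
qed

lemma integrable_g: "1 \<le> t \<Longrightarrow> integrable M (cs_g orc x \<Delta> t)"
proof -
  assume t: "1 \<le> t"
  interpret M: prob_space M by (rule prob_space_M)
  have "integrable M (\<lambda>\<omega>. gradF (cs_y x \<Delta> t \<omega>))" by (rule integrable_gradF_y[OF t])
  moreover have "integrable M (noise t)"
    using M.integrable_norm_square_integrable[OF measurable_noise[OF t] integrable_noise_sq[OF t]]
      measurable_noise[OF t] by (simp add: integrable_norm_iff)
  ultimately show ?thesis by (simp add: g_eq_gradF_plus_noise[abs_def])
qed

lemma integrable_regret_normalized:
  assumes \<Delta>_sq: "\<And>s. 1 \<le> s \<Longrightarrow> s \<le> t \<Longrightarrow> integrable M (\<lambda>\<omega>. (norm (\<Delta> s \<omega>))\<^sup>2)"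
  shows "integrable M (\<lambda>\<omega>. cs_regret \<beta> \<mu> orc x \<Delta> t (cs_u D \<beta> gradF x \<Delta> t \<omega>) \<omega>)"
proof -
  interpret M: prob_space M by (rule prob_space_M)
  define S where "S \<omega> = (\<Sum>s=1..t. \<beta> ^ (t - s) *\<^sub>R gradF (cs_y x \<Delta> s \<omega>))" for \<omega>
  define u where "u \<omega> = - ((D / norm (S \<omega>)) *\<^sub>R S \<omega>)" for \<omega>
  define Sg where "Sg \<omega> = (\<Sum>s=1..t. \<beta> ^ (t - s) *\<^sub>R cs_g orc x \<Delta> s \<omega>)" for \<omega>
  have regret_eq: "cs_regret \<beta> \<mu> orc x \<Delta> t (cs_u D \<beta> gradF x \<Delta> t \<omega>) \<omega>
      = (\<Sum>s=1..t. \<beta> ^ (t - s) * cs_loss \<mu> (cs_g orc x \<Delta> s \<omega>) (\<Delta> s \<omega>)) - inner (Sg \<omega>) (u \<omega>)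
        - \<mu> / 2 * (norm (u \<omega>))\<^sup>2 * (\<Sum>s=1..t. \<beta> ^ (t - s))" for \<omega>
    unfolding cs_regret_def cs_u_def Let_def discounted_regret_eq S_def u_def Sg_def ..
  have [measurable]: "S \<in> borel_measurable M"
    unfolding S_def[abs_def] using measurable_compose[OF measurable_y measurable_gradF]
    by (intro borel_measurable_sum borel_measurable_scaleR) auto
  have Sg_int: "integrable M Sg"
    unfolding Sg_def[abs_def] using integrable_g by (intro Bochner_Integration.integrable_sum) auto
  have u_le: "norm (u \<omega>) \<le> \<bar>D\<bar>" for \<omega>
    using norm_normalized_scaleR_le by (simp add: u_def)
  then have u_sq_le: "(norm (u \<omega>))\<^sup>2 \<le> D\<^sup>2" for \<omega>
    using power_mono[of "norm (u \<omega>)" "\<bar>D\<bar>" 2] by simp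
  have "integrable M (\<lambda>\<omega>. \<Sum>s=1..t. \<beta> ^ (t - s) * cs_loss \<mu> (cs_g orc x \<Delta> s \<omega>) (\<Delta> s \<omega>))"
    using integrable_cs_loss[OF _ \<Delta>_sq] by (intro Bochner_Integration.integrable_sum) auto
  moreover have "integrable M (\<lambda>\<omega>. inner (Sg \<omega>) (u \<omega>))"
  proof (rule Bochner_Integration.integrable_bound)
    show "integrable M (\<lambda>\<omega>. \<bar>D\<bar> * norm (Sg \<omega>))" using Sg_int by simp
    show "(\<lambda>\<omega>. inner (Sg \<omega>) (u \<omega>)) \<in> borel_measurable M"
      using Sg_int unfolding u_def[abs_def] by measurable
    show "AE \<omega> in M. norm (inner (Sg \<omega>) (u \<omega>)) \<le> norm (\<bar>D\<bar> * norm (Sg \<omega>))"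
    proof (intro AE_I2)
      fix \<omega>
      have "\<bar>inner (Sg \<omega>) (u \<omega>)\<bar> \<le> norm (Sg \<omega>) * norm (u \<omega>)" by (rule Cauchy_Schwarz_ineq2)
      also have "\<dots> \<le> norm (Sg \<omega>) * \<bar>D\<bar>" using u_le by (intro mult_left_mono) auto
      finally show "norm (inner (Sg \<omega>) (u \<omega>)) \<le> norm (\<bar>D\<bar> * norm (Sg \<omega>))"
        by (simp add: mult.commute)
    qed
  qed
  moreover have "integrable M (\<lambda>\<omega>. \<mu> / 2 * (norm (u \<omega>))\<^sup>2 * (\<Sum>s=1..t. \<beta> ^ (t - s)))"
  proof (rule M.integrable_const_bound[where B="\<bar>\<mu> / 2 * D\<^sup>2 * (\<Sum>s=1..t. \<beta> ^ (t - s))\<bar>"])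
    show "AE \<omega> in M. norm (\<mu> / 2 * (norm (u \<omega>))\<^sup>2 * (\<Sum>s=1..t. \<beta> ^ (t - s)))
        \<le> \<bar>\<mu> / 2 * D\<^sup>2 * (\<Sum>s=1..t. \<beta> ^ (t - s))\<bar>"
      by (intro AE_I2) (simp add: abs_mult mult_left_mono mult_right_mono u_sq_le)
  qed (unfold u_def, measurable)
  ultimately show ?thesis unfolding regret_eq by simp
qed

lemma sum_integral_cs_loss:
  assumes \<Delta>_sq: "\<And>t. 1 \<le> t \<Longrightarrow> t \<le> T \<Longrightarrow> integrable M (\<lambda>\<omega>. (norm (\<Delta> t \<omega>))\<^sup>2)"
  shows "(\<Sum>t=1..T. \<integral>\<omega>. cs_loss \<mu> (cs_g orc x \<Delta> t \<omega>) (\<Delta> t \<omega>) \<partial>M)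
    = - (\<integral>\<omega>. (\<Sum>t=1..T. F (x t \<omega>) - F (cs_w x \<Delta> t \<omega>)) \<partial>M)
      + \<mu> / 2 * (\<integral>\<omega>. (\<Sum>t=1..T. (norm (\<Delta> t \<omega>))\<^sup>2) \<partial>M)"
proof -
  have "integrable M (\<lambda>\<omega>. F (x t \<omega>) - F (cs_w x \<Delta> t \<omega>))" if "t \<in> {1..T}" for t
    using integrable_minus[OF integrable_F_step[OF _ \<Delta>_sq]] that by simp
  then have "(\<integral>\<omega>. (\<Sum>t=1..T. F (x t \<omega>) - F (cs_w x \<Delta> t \<omega>)) \<partial>M)
      = - (\<Sum>t=1..T. \<integral>\<omega>. F (cs_w x \<Delta> t \<omega>) - F (x t \<omega>) \<partial>M)"
    by (simp add: Bochner_Integration.integral_sum sum_negf[symmetric] flip: integral_minus)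
  moreover have "(\<integral>\<omega>. (\<Sum>t=1..T. (norm (\<Delta> t \<omega>))\<^sup>2) \<partial>M) = (\<Sum>t=1..T. \<integral>\<omega>. (norm (\<Delta> t \<omega>))\<^sup>2 \<partial>M)"
    using \<Delta>_sq by (simp add: Bochner_Integration.integral_sum)
  ultimately show ?thesis
    using integral_cs_loss[OF _ \<Delta>_sq] by (simp add: sum.distrib sum_distrib_left)
qed

lemma undiscount_integral_norm_discounted_noise_le:
  assumes "0 \<le> \<beta>" "\<beta> < 1" "1 \<le> T"
  shows "undiscount \<beta> T (\<lambda>t. \<integral>\<omega>. norm (\<Sum>s=1..t. \<beta> ^ (t - s) *\<^sub>R noise s \<omega>) \<partial>M)
    \<le> \<sigma> / sqrt (1 - \<beta>) * (\<beta> + (1 - \<beta>) * T)"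
  using undiscount_mono[of \<beta> T _ "\<lambda>_. \<sigma> / sqrt (1 - \<beta>)"] integral_norm_discounted_noise_le assms
  by (simp add: undiscount_const)

lemma pointwise_conversion_bound:
  assumes "0 \<le> \<beta>" "\<beta> < 1" "0 \<le> D" "0 \<le> \<mu>" "1 \<le> T"
  shows "D * T * (\<Sum>t=1..T. tau_prob \<beta> T t * norm (\<Sum>s=1..t. cs_q \<beta> t s *\<^sub>R gradF (cs_y x \<Delta> s \<omega>)))
    \<le> undiscount \<beta> T (\<lambda>t. cs_regret \<beta> \<mu> orc x \<Delta> t (cs_u D \<beta> gradF x \<Delta> t \<omega>) \<omega>)
      - (\<Sum>t=1..T. cs_loss \<mu> (cs_g orc x \<Delta> t \<omega>) (\<Delta> t \<omega>))
      + D * undiscount \<beta> T (\<lambda>t. norm (\<Sum>s=1..t. \<beta> ^ (t - s) *\<^sub>R noise s \<omega>))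
      + \<mu> / 2 * D\<^sup>2 * T"
  using tau_prob_sum_le_undiscount_regret[OF assms, of "\<lambda>s. gradF (cs_y x \<Delta> s \<omega>)" "\<lambda>s. noise s \<omega>"
      "\<lambda>s. \<Delta> s \<omega>"]
  by (simp add: cs_regret_def cs_u_def Let_def g_eq_gradF_plus_noise)

theorem expected_conversion_bound:
  assumes \<beta>: "0 \<le> \<beta>" "\<beta> < 1" and D: "0 \<le> D" and \<mu>: "0 \<le> \<mu>" and T: "1 \<le> T"
    and \<Delta>_sq: "\<And>t. 1 \<le> t \<Longrightarrow> t \<le> T \<Longrightarrow> integrable M (\<lambda>\<omega>. (norm (\<Delta> t \<omega>))\<^sup>2)"
  shows "D * T * (\<Sum>t=1..T. tau_prob \<beta> T t *
        (\<integral>\<omega>. norm (\<Sum>s=1..t. cs_q \<beta> t s *\<^sub>R gradF (cs_y x \<Delta> s \<omega>)) \<partial>M))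
    \<le> undiscount \<beta> T (\<lambda>t. \<integral>\<omega>. cs_regret \<beta> \<mu> orc x \<Delta> t (cs_u D \<beta> gradF x \<Delta> t \<omega>) \<omega> \<partial>M)
      + (\<integral>\<omega>. (\<Sum>t=1..T. F (x t \<omega>) - F (cs_w x \<Delta> t \<omega>)) \<partial>M)
      - \<mu> / 2 * (\<integral>\<omega>. (\<Sum>t=1..T. (norm (\<Delta> t \<omega>))\<^sup>2) \<partial>M)
      + D * (\<sigma> / sqrt (1 - \<beta>) * (\<beta> + (1 - \<beta>) * T)) + \<mu> / 2 * D\<^sup>2 * T"
proof -
  interpret M: prob_space M by (rule prob_space_M)
  define R where "R t \<omega> = cs_regret \<beta> \<mu> orc x \<Delta> t (cs_u D \<beta> gradF x \<Delta> t \<omega>) \<omega>" for t \<omega>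
  define L where "L t \<omega> = cs_loss \<mu> (cs_g orc x \<Delta> t \<omega>) (\<Delta> t \<omega>)" for t \<omega>
  define E where "E t \<omega> = norm (\<Sum>s=1..t. \<beta> ^ (t - s) *\<^sub>R noise s \<omega>)" for t \<omega>
  define Q where "Q t \<omega> = norm (\<Sum>s=1..t. cs_q \<beta> t s *\<^sub>R gradF (cs_y x \<Delta> s \<omega>))" for t \<omega>
  have R_int: "integrable M (R t)" if "t \<le> T" for t
    unfolding R_def using that \<Delta>_sq by (intro integrable_regret_normalized) auto
  have L_int: "integrable M (L t)" if "1 \<le> t" "t \<le> T" for t
    unfolding L_def[abs_def] using that \<Delta>_sq by (intro integrable_cs_loss) auto
  have E_int: "integrable M (E t)" for t
    unfolding E_def[abs_def] using \<beta> by (rule integrable_norm_discounted_noise)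
  have Q_int: "integrable M (Q t)" for t
    unfolding Q_def[abs_def] using integrable_gradF_y
    by (intro integrable_norm Bochner_Integration.integrable_sum integrable_scaleR_right) auto
  have R_undiscount_int: "integrable M (\<lambda>\<omega>. undiscount \<beta> T (\<lambda>t. R t \<omega>))"
    using T R_int by (intro integrable_undiscount) auto
  have E_undiscount_int: "integrable M (\<lambda>\<omega>. undiscount \<beta> T (\<lambda>t. E t \<omega>))"
    using T E_int by (intro integrable_undiscount) auto
  have L_sum_int: "integrable M (\<lambda>\<omega>. \<Sum>t=1..T. L t \<omega>)"
    using L_int by (intro Bochner_Integration.integrable_sum) auto
  have "D * T * (\<Sum>t=1..T. tau_prob \<beta> T t * (\<integral>\<omega>. Q t \<omega> \<partial>M))
      = (\<integral>\<omega>. D * T * (\<Sum>t=1..T. tau_prob \<beta> T t * Q t \<omega>) \<partial>M)"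
    using Q_int by (simp add: Bochner_Integration.integral_sum)
  also have "\<dots> \<le> (\<integral>\<omega>. undiscount \<beta> T (\<lambda>t. R t \<omega>) - (\<Sum>t=1..T. L t \<omega>)
      + D * undiscount \<beta> T (\<lambda>t. E t \<omega>) + \<mu> / 2 * D\<^sup>2 * T \<partial>M)"
  proof (rule integral_mono)
    show "integrable M (\<lambda>\<omega>. D * T * (\<Sum>t=1..T. tau_prob \<beta> T t * Q t \<omega>))"
      using Q_int by (intro integrable_mult_right Bochner_Integration.integrable_sum) auto
    show "integrable M (\<lambda>\<omega>. undiscount \<beta> T (\<lambda>t. R t \<omega>) - (\<Sum>t=1..T. L t \<omega>)
        + D * undiscount \<beta> T (\<lambda>t. E t \<omega>) + \<mu> / 2 * D\<^sup>2 * T)"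
      using R_undiscount_int L_sum_int E_undiscount_int by simp
    show "D * T * (\<Sum>t=1..T. tau_prob \<beta> T t * Q t \<omega>) \<le> undiscount \<beta> T (\<lambda>t. R t \<omega>) - (\<Sum>t=1..T. L t \<omega>)
        + D * undiscount \<beta> T (\<lambda>t. E t \<omega>) + \<mu> / 2 * D\<^sup>2 * T" for \<omega>
      unfolding R_def L_def E_def Q_def using \<beta> D \<mu> T by (rule pointwise_conversion_bound)
  qed
  also have "\<dots> = undiscount \<beta> T (\<lambda>t. \<integral>\<omega>. R t \<omega> \<partial>M) - (\<Sum>t=1..T. \<integral>\<omega>. L t \<omega> \<partial>M)
      + D * undiscount \<beta> T (\<lambda>t. \<integral>\<omega>. E t \<omega> \<partial>M) + \<mu> / 2 * D\<^sup>2 * T"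
    using T R_int L_int E_int R_undiscount_int L_sum_int E_undiscount_int
    by (simp add: integral_undiscount Bochner_Integration.integral_sum M.prob_space)
  also have "\<dots> \<le> undiscount \<beta> T (\<lambda>t. \<integral>\<omega>. R t \<omega> \<partial>M) - (\<Sum>t=1..T. \<integral>\<omega>. L t \<omega> \<partial>M)
      + D * (\<sigma> / sqrt (1 - \<beta>) * (\<beta> + (1 - \<beta>) * T)) + \<mu> / 2 * D\<^sup>2 * T"
    unfolding E_def
    using mult_left_mono[OF undiscount_integral_norm_discounted_noise_le[OF \<beta> T] D] by simp
  also have "(\<Sum>t=1..T. \<integral>\<omega>. L t \<omega> \<partial>M) = - (\<integral>\<omega>. (\<Sum>t=1..T. F (x t \<omega>) - F (cs_w x \<Delta> t \<omega>)) \<partial>M)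
      + \<mu> / 2 * (\<integral>\<omega>. (\<Sum>t=1..T. (norm (\<Delta> t \<omega>))\<^sup>2) \<partial>M)"
    unfolding L_def by (rule sum_integral_cs_loss[OF \<Delta>_sq])
  finally show ?thesis
    unfolding R_def Q_def by simp
qed

end

lemma rearrange_conversion_bound:
  fixes P R Fs Q \<sigma> \<beta> D \<mu> T :: real
  assumes D: "0 < D" and T: "0 < T" and \<beta>: "\<beta> < 1"
    and bound: "D * T * P \<le> R + Fs - \<mu> / 2 * Q + D * (\<sigma> / sqrt (1 - \<beta>) * (\<beta> + (1 - \<beta>) * T))
      + \<mu> / 2 * D\<^sup>2 * T"
  shows "P \<le> R / (D * T) - \<mu> * Q / (2 * D * T) + Fs / (D * T) + \<sigma> * \<beta> / (T * sqrt (1 - \<beta>))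
    + \<sigma> * sqrt (1 - \<beta>) + \<mu> * D / 2"
proof -
  define r where "r = sqrt (1 - \<beta>)"
  have r: "0 < r" "1 - \<beta> = r\<^sup>2" using \<beta> by (auto simp: r_def)
  have "D * T * (R / (D * T) - \<mu> * Q / (2 * D * T) + Fs / (D * T) + \<sigma> * \<beta> / (T * r)
      + \<sigma> * r + \<mu> * D / 2) = R + Fs - \<mu> / 2 * Q + D * (\<sigma> / r * (\<beta> + r\<^sup>2 * T)) + \<mu> / 2 * D\<^sup>2 * T"
    using D T r(1) by (simp add: field_simps power2_eq_square)
  then have "D * T * P \<le> D * T * (R / (D * T) - \<mu> * Q / (2 * D * T) + Fs / (D * T) + \<sigma> * \<beta> / (T * r)
      + \<sigma> * r + \<mu> * D / 2)"
    using bound[folded r_def, unfolded r(2)] by simp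
  then show ?thesis
    using D T unfolding r_def by (simp add: mult_le_cancel_left_pos)
qed

theorem lemma3:
  fixes F :: "'a::euclidean_space \<Rightarrow> real"
    and gradF :: "'a \<Rightarrow> 'a"
    and G \<sigma> \<beta> D \<mu> :: real
    and T :: nat
    and N :: "'w measure"
    and orc :: "'a \<Rightarrow> 'w \<Rightarrow> 'a"
    and A :: "nat \<Rightarrow> (nat \<Rightarrow> 'a) \<Rightarrow> 'a"
    and x \<Delta> :: "nat \<Rightarrow> (nat \<Rightarrow> real \<times> 'w) \<Rightarrow> 'a"
  defines "M \<equiv> conv_space N"
  assumes grad: "\<And>z. (F has_derivative (\<lambda>h. inner (gradF z) h)) (at z)"
    and ftc: "\<And>z v. ((\<lambda>r. inner (gradF (v + r *\<^sub>R (z - v))) (z - v)) has_integral (F z - F v)) {0..1}"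
    and gradbd: "\<And>z. norm (gradF z) \<le> G"
    and N_prob: "prob_space N"
    and orc_meas: "(\<lambda>p. orc (fst p) (snd p)) \<in> borel_measurable (borel \<Otimes>\<^sub>M N)"
    and orc_int: "\<And>z. integrable N (orc z)"
    and orc_unbiased: "\<And>z. (\<integral>\<xi>. orc z \<xi> \<partial>N) = gradF z"
    and orc_var_int: "\<And>z. integrable N (\<lambda>\<xi>. (norm (orc z \<xi> - gradF z))\<^sup>2)"
    and orc_var: "\<And>z. (\<integral>\<xi>. (norm (orc z \<xi> - gradF z))\<^sup>2 \<partial>N) \<le> \<sigma>\<^sup>2"
    and sigma: "\<sigma> \<ge> 0"
    and beta: "0 < \<beta>" "\<beta> < 1"
    and Dpos: "D > 0"
    and mu: "\<mu> \<ge> 0"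
    and T: "T \<ge> 1"
    and learner: "\<And>t \<omega>. 1 \<le> t \<Longrightarrow>
        \<Delta> t \<omega> = A t (\<lambda>i. if 1 \<le> i \<and> i < t then cs_g orc x \<Delta> i \<omega> else 0)"
    and x_adapted: "\<And>t \<omega> \<omega>'. 1 \<le> t \<Longrightarrow> (\<forall>i. 1 \<le> i \<and> i < t \<longrightarrow> \<omega> i = \<omega>' i) \<Longrightarrow>
        x t \<omega> = x t \<omega>'"
    and x_meas: "\<And>t. 1 \<le> t \<Longrightarrow> x t \<in> borel_measurable M"
    and \<Delta>_meas: "\<And>t. 1 \<le> t \<Longrightarrow> \<Delta> t \<in> borel_measurable M"
    and \<Delta>_sq_int: "\<And>t. 1 \<le> t \<Longrightarrow> t \<le> T \<Longrightarrow> integrable M (\<lambda>\<omega>. (norm (\<Delta> t \<omega>))\<^sup>2)"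
  shows "(\<Sum>t=1..T. tau_prob \<beta> T t *
            (\<integral>\<omega>. norm (\<Sum>s=1..t. cs_q \<beta> t s *\<^sub>R gradF (cs_y x \<Delta> s \<omega>)) \<partial>M))
     \<le> (\<beta> * (\<integral>\<omega>. cs_regret \<beta> \<mu> orc x \<Delta> T (cs_u D \<beta> gradF x \<Delta> T \<omega>) \<omega> \<partial>M)
          + (1 - \<beta>) * (\<Sum>t=1..T. \<integral>\<omega>. cs_regret \<beta> \<mu> orc x \<Delta> t (cs_u D \<beta> gradF x \<Delta> t \<omega>) \<omega> \<partial>M))
          / (D * T)
       - \<mu> * (\<integral>\<omega>. (\<Sum>t=1..T. (norm (\<Delta> t \<omega>))\<^sup>2) \<partial>M) / (2 * D * T)
       + (\<integral>\<omega>. (\<Sum>t=1..T. F (x t \<omega>) - F (cs_w x \<Delta> t \<omega>)) \<partial>M) / (D * T)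
       + \<sigma> * \<beta> / (T * sqrt (1 - \<beta>))
       + \<sigma> * sqrt (1 - \<beta>)
       + \<mu> * D / 2"
proof -
  interpret conversion_scheme F gradF G \<sigma> N orc A x \<Delta>
    by (intro conversion_scheme.intro)
      (use ftc gradbd N_prob orc_meas orc_int orc_unbiased orc_var_int orc_var sigma
        learner x_adapted x_meas \<Delta>_meas in \<open>simp_all add: M_def\<close>)
  show ?thesis
    using expected_conversion_bound[of \<beta> D \<mu> T] beta Dpos mu T \<Delta>_sq_int
    unfolding M_def by (intro rearrange_conversion_bound) (auto simp: undiscount_def)
qed

end
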